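(* Let $P=\forall x_1,\dots,x_n\,\exists y_1(D_1),\dots,y_k(D_k)$ be a topologically sorted prefix for $X$ and $Y$, let $G_{\mathrm{syn}}$ be an admissible group w.r.t. $P$, and let $G\subseteq G_{\mathrm{syn}}$ be a finite subset such that for all $g\in G$ and all $i,j\in\{1,\dots,k\}$: (1) $g(x)\in\operatorname{BF}(D_i)$ for all $x\in D_i$; (2) $g(y_i)\in\operatorname{BF}(\{y_j\mid D_j=D_i\})$; (3) if $D_i$ and $D_j$ are incomparable (neither $D_i\subseteq D_j$ nor $D_j\subseteq D_i$) and $g(y_i)\neq y_i$, then $g(y_j)=y_j$ and $g(x)=x$ for all $x\in D_j\setminus D_i$. Then \[\psi=\bigwedge_{g\in G}\bigwedge_{i=1}^{k}\Big(\Big(\bigwedge_{x\in D_i}(x\leftrightarrow g(x))\wedge\bigwedge_{j<i}(y_j\leftrightarrow g(y_j))\Big)\rightarrow\big(y_i\rightarrow g(y_i)\big)\Big)\] is a conjunctive symmetry breaker for the associated group of $G_{\mathrm{syn}}$.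
   Context: $X=\{x_1,\dots,x_n\}$, $Y=\{y_1,\dots,y_k\}$ are finite disjoint sets of propositional variables; for $V\subseteq X\cup Y$, $\operatorname{BF}(V)$ is the set of propositional formulas over $V$ (built from $\top,\bot$, variables and connectives); $\mathcal A(V)$ is the set of assignments $\sigma:V\to\{\top,\bot\}$ and $[\phi]_\sigma$ the truth value. A prefix $P=\forall x_1,\dots,x_n\,\exists y_1(D_1),\dots,y_k(D_k)$ has dependency sets $D_j\subseteq X$; it is topologically sorted if $D_i\subsetneq D_j$ implies $i<j$. An interpretation is $s=(s_1,\dots,s_k)$ with $s_j:\{\top,\bot\}^{|D_j|}\to\{\top,\bot\}$; $\mathcal S(P)$ is the set of interpretations. For $\sigma\in\mathcal A(X)$, the induced assignment $\sigma_s\in\mathcal A(X\cup Y)$ equals $\sigma$ on $X$ and $\sigma_s(y_j)=s_j$ evaluated at the values of $\sigma$ on $D_j$ (variables in increasing index order). For a DQBF $P.\phi$ ($\phi\in\operatorname{BF}(X\cup Y)$), $[P.\phi]_s=\bigwedge_{\sigma\in\mathcal A(X)}[\phi]_{\sigma_s}$. For a function $g:\operatorname{BF}(V)\to\operatorname{BF}(V)$ and $\sigma\in\mathcal A(V)$, $g(\sigma)\in\mathcal A(V)$ is $g(\sigma)(v)=[g(v)]_\sigma$; $g$ preserves propositional satisfiability if $[g(\phi)]_\sigma=[\phi]_{g(\sigma)}$ for all $\sigma,\phi$. A formula in $\operatorname{BF}(Y)$ depends on $x_i$ if it contains some $y_j$ with $x_i\in D_j$. A bijection $g:\operatorname{BF}(X\cup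 Y)\to\operatorname{BF}(X\cup Y)$ is admissible w.r.t. $P$ if it preserves propositional satisfiability, $g(x_i)\in\operatorname{BF}(X)$ and $g(y_j)\in\operatorname{BF}(Y)$ for all $i,j$, and whenever $g(y_j)$ depends on $x_i$ then $g^{-1}(x_i)\in\operatorname{BF}(D_j)$. An admissible group is a subgroup (under composition) of the group of all admissible functions. For admissible $g$ and $\sigma\in\mathcal A(X)$, $g(\sigma)\in\mathcal A(X)$ is defined by $g(\sigma)(x)=[g(x)]_\sigma$. The associated group $G_{\mathrm{sem}}$ of an admissible group $G_{\mathrm{syn}}$ is the set of all bijections $f:\mathcal S(P)\to\mathcal S(P)$ such that for every $s\in\mathcal S(P)$ and every $\sigma\in\mathcal A(X)$ there exists $g\in G_{\mathrm{syn}}$ with $g(\sigma)_{f(s)}=g(\sigma_s)$. Given a group $G_{\mathrm{sem}}$ of bijections of $\mathcal S(P)$, a formula $\psi\in\operatorname{BF}(X\cup Y)$ is a conjunctive symmetry breaker for $G_{\mathrm{sem}}$ if for every $s\in\mathcal S(P)$ there is $g\in G_{\mathrm{sem}}$ with $[P.\psi]_{g(s)}=\top$. *)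

theory Defs
  imports Main
begin

text \<open>Universal variables x_i are XV i (i = 1..n), existential variables y_j are YV j (j = 1..k).\<close>
datatype var = XV nat | YV nat

datatype form = FTop | FBot | FVar var | FNot form | FAnd form form | FOr form form
  | FImp form form | FIff form form

fun vars :: "form \<Rightarrow> var set" where
  "vars FTop = {}"
| "vars FBot = {}"
| "vars (FVar v) = {v}"
| "vars (FNot a) = vars a"
| "vars (FAnd a b) = vars a \<union> vars b"
| "vars (FOr a b) = vars a \<union> vars b"
| "vars (FImp a b) = vars a \<union> vars b"
| "vars (FIff a b) = vars a \<union> vars b"

fun eval :: "(var \<Rightarrow> bool) \<Rightarrow> form \<Rightarrow> bool" where
  "eval \<sigma> FTop = True"
| "eval \<sigma> FBot = False"
| "eval \<sigma> (FVar v) = \<sigma> v"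
| "eval \<sigma> (FNot a) = (\<not> eval \<sigma> a)"
| "eval \<sigma> (FAnd a b) = (eval \<sigma> a \<and> eval \<sigma> b)"
| "eval \<sigma> (FOr a b) = (eval \<sigma> a \<or> eval \<sigma> b)"
| "eval \<sigma> (FImp a b) = (eval \<sigma> a \<longrightarrow> eval \<sigma> b)"
| "eval \<sigma> (FIff a b) = (eval \<sigma> a \<longleftrightarrow> eval \<sigma> b)"

definition Xs :: "nat \<Rightarrow> var set" where "Xs n = XV ` {1..n}"
definition Ys :: "nat \<Rightarrow> var set" where "Ys k = YV ` {1..k}"

definition BF :: "var set \<Rightarrow> form set" where "BF V = {\<phi>. vars \<phi> \<subseteq> V}"

text \<open>A(V): assignments V \<rightarrow> bool, represented canonically as total functions that are False outside V.\<close>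
definition Asg :: "var set \<Rightarrow> (var \<Rightarrow> bool) set" where
  "Asg V = {\<sigma>. \<forall>v. v \<notin> V \<longrightarrow> \<sigma> v = False}"

text \<open>Finite conjunction of a (finite) set of formulas; the order of conjuncts is irrelevant semantically.\<close>
definition Conj :: "form set \<Rightarrow> form" where
  "Conj F = foldr FAnd (SOME xs. set xs = F) FTop"

text \<open>A prefix is given by n, k and dependency sets D j \<subseteq> {1..n} (indices of universal variables), j = 1..k.\<close>
definition prefix :: "nat \<Rightarrow> nat \<Rightarrow> (nat \<Rightarrow> nat set) \<Rightarrow> bool" where
  "prefix n k D = (\<forall>j\<in>{1..k}. D j \<subseteq> {1..n})"

definition topsorted :: "nat \<Rightarrow> (nat \<Rightarrow> nat set) \<Rightarrow> bool" where
  "topsorted k D = (\<forall>i\<in>{1..k}. \<forall>j\<in>{1..k}. D i \<subset> D j \<longrightarrow> i < j)"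

definition Dv :: "(nat \<Rightarrow> nat set) \<Rightarrow> nat \<Rightarrow> var set" where "Dv D j = XV ` D j"

text \<open>Interpretations: s j : {T,F}^|D_j| \<rightarrow> {T,F}, as functions on bool lists of length |D_j|
  (value False on lists of other lengths, and s j = False for j outside 1..k).\<close>
definition Interp :: "nat \<Rightarrow> (nat \<Rightarrow> nat set) \<Rightarrow> (nat \<Rightarrow> bool list \<Rightarrow> bool) set" where
  "Interp k D = {s. (\<forall>j. j \<notin> {1..k} \<longrightarrow> s j = (\<lambda>_. False)) \<and>
       (\<forall>j\<in>{1..k}. \<forall>l. length l \<noteq> card (D j) \<longrightarrow> s j l = False)}"

definition induced :: "nat \<Rightarrow> nat \<Rightarrow> (nat \<Rightarrow> nat set) \<Rightarrow> (nat \<Rightarrow> bool list \<Rightarrow> bool)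
    \<Rightarrow> (var \<Rightarrow> bool) \<Rightarrow> (var \<Rightarrow> bool)" where
  "induced n k D s \<sigma> v = (case v of
      XV i \<Rightarrow> (if i \<in> {1..n} then \<sigma> (XV i) else False)
    | YV j \<Rightarrow> (if j \<in> {1..k} then s j (map (\<lambda>i. \<sigma> (XV i)) (sorted_list_of_set (D j))) else False))"

definition dqbf_val :: "nat \<Rightarrow> nat \<Rightarrow> (nat \<Rightarrow> nat set) \<Rightarrow> form \<Rightarrow> (nat \<Rightarrow> bool list \<Rightarrow> bool) \<Rightarrow> bool" where
  "dqbf_val n k D \<phi> s = (\<forall>\<sigma>\<in>Asg (Xs n). eval (induced n k D s \<sigma>) \<phi>)"

definition gasg :: "(form \<Rightarrow> form) \<Rightarrow> var set \<Rightarrow> (var \<Rightarrow> bool) \<Rightarrow> (var \<Rightarrow> bool)" where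
  "gasg g V \<sigma> v = (if v \<in> V then eval \<sigma> (g (FVar v)) else False)"

definition preserves_sat :: "var set \<Rightarrow> (form \<Rightarrow> form) \<Rightarrow> bool" where
  "preserves_sat V g = (\<forall>\<sigma>\<in>Asg V. \<forall>\<phi>\<in>BF V. eval \<sigma> (g \<phi>) = eval (gasg g V \<sigma>) \<phi>)"

definition depends_on :: "nat \<Rightarrow> (nat \<Rightarrow> nat set) \<Rightarrow> form \<Rightarrow> nat \<Rightarrow> bool" where
  "depends_on k D \<phi> i = (\<exists>j\<in>{1..k}. YV j \<in> vars \<phi> \<and> i \<in> D j)"

text \<open>Admissible bijections of BF(X \<union> Y); as total HOL functions they are canonically
  taken to be the identity outside BF(X \<union> Y), so that composition is group composition.\<close>
definition admissible :: "nat \<Rightarrow> nat \<Rightarrow> (nat \<Rightarrow> nat set) \<Rightarrow> (form \<Rightarrow> form) \<Rightarrow> bool" where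
  "admissible n k D g = (
     bij_betw g (BF (Xs n \<union> Ys k)) (BF (Xs n \<union> Ys k)) \<and>
     (\<forall>\<phi>. \<phi> \<notin> BF (Xs n \<union> Ys k) \<longrightarrow> g \<phi> = \<phi>) \<and>
     preserves_sat (Xs n \<union> Ys k) g \<and>
     (\<forall>i\<in>{1..n}. g (FVar (XV i)) \<in> BF (Xs n)) \<and>
     (\<forall>j\<in>{1..k}. g (FVar (YV j)) \<in> BF (Ys k)) \<and>
     (\<forall>j\<in>{1..k}. \<forall>i\<in>{1..n}. depends_on k D (g (FVar (YV j))) i \<longrightarrow>
         the_inv_into (BF (Xs n \<union> Ys k)) g (FVar (XV i)) \<in> BF (Dv D j)))"

definition admissible_group :: "nat \<Rightarrow> nat \<Rightarrow> (nat \<Rightarrow> nat set) \<Rightarrow> (form \<Rightarrow> form) set \<Rightarrow> bool" where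
  "admissible_group n k D Gs = (
     (\<forall>g\<in>Gs. admissible n k D g) \<and> id \<in> Gs \<and>
     (\<forall>g\<in>Gs. \<forall>h\<in>Gs. g \<circ> h \<in> Gs) \<and>
     (\<forall>g\<in>Gs. \<exists>h\<in>Gs. g \<circ> h = id \<and> h \<circ> g = id))"

text \<open>The associated group G_sem of G_syn (bijections of S(P); canonically identity outside S(P)).\<close>
definition assoc_group :: "nat \<Rightarrow> nat \<Rightarrow> (nat \<Rightarrow> nat set) \<Rightarrow> (form \<Rightarrow> form) set
    \<Rightarrow> ((nat \<Rightarrow> bool list \<Rightarrow> bool) \<Rightarrow> (nat \<Rightarrow> bool list \<Rightarrow> bool)) set" where
  "assoc_group n k D Gs = {f. bij_betw f (Interp k D) (Interp k D) \<and>
      (\<forall>s. s \<notin> Interp k D \<longrightarrow> f s = s) \<and>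
      (\<forall>s\<in>Interp k D. \<forall>\<sigma>\<in>Asg (Xs n). \<exists>g\<in>Gs.
          induced n k D (f s) (gasg g (Xs n) \<sigma>) = gasg g (Xs n \<union> Ys k) (induced n k D s \<sigma>))}"

definition conj_symmetry_breaker :: "nat \<Rightarrow> nat \<Rightarrow> (nat \<Rightarrow> nat set)
    \<Rightarrow> ((nat \<Rightarrow> bool list \<Rightarrow> bool) \<Rightarrow> (nat \<Rightarrow> bool list \<Rightarrow> bool)) set \<Rightarrow> form \<Rightarrow> bool" where
  "conj_symmetry_breaker n k D Gsem \<psi> =
     (\<forall>s\<in>Interp k D. \<exists>f\<in>Gsem. dqbf_val n k D \<psi> (f s))"

definition sb_clause :: "(nat \<Rightarrow> nat set) \<Rightarrow> (form \<Rightarrow> form) \<Rightarrow> nat \<Rightarrow> form" where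
  "sb_clause D g i =
     FImp (FAnd (Conj {FIff (FVar (XV x)) (g (FVar (XV x))) | x. x \<in> D i})
                (Conj {FIff (FVar (YV j)) (g (FVar (YV j))) | j. j \<in> {1..<i}}))
          (FImp (FVar (YV i)) (g (FVar (YV i))))"

definition sb_formula :: "nat \<Rightarrow> (nat \<Rightarrow> nat set) \<Rightarrow> (form \<Rightarrow> form) set \<Rightarrow> form" where
  "sb_formula k D G = Conj {sb_clause D g i | g i. g \<in> G \<and> i \<in> {1..k}}"

end

theory Submission
  imports Defs "HOL-Combinatorics.Transposition"
begin

text \<open>
  Call an interpretation t compatible with s if for every universal assignment \<sigma> some
  g \<in> G_syn maps the assignment induced by s at \<sigma> to the one induced by t at g(\<sigma>); the
  transposition of two mutually compatible interpretations lies in G_sem. Among the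
  interpretations mutually compatible with s choose t minimising, lexicographically in j,
  the number of inputs on which t_j is true. Suppose t violated the clause of \<psi> for g and i
  at \<sigma>. Change t only on the universal assignments \<rho> that agree with \<sigma> on D_i, and there only
  the y_j with D_i \<subseteq> D_j: the new value of y_j at \<rho> is the value of g(y_j) under t at the
  preimage of \<rho> under g. Conditions (1)-(3), admissibility and the topological order make the
  result mutually compatible with t; it agrees with t on y_1, ..., y_(i-1), and y_i is true
  on fewer inputs, contradicting minimality.
\<close>

lemma eval_cong: "(\<And>v. v \<in> vars \<phi> \<Longrightarrow> \<tau> v = \<tau>' v) \<Longrightarrow> eval \<tau> \<phi> = eval \<tau>' \<phi>"
  by (induction \<phi>) auto

lemma FVar_in_BF [simp]: "FVar v \<in> BF V \<longleftrightarrow> v \<in> V"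
  by (simp add: BF_def)

lemma XV_in_Xs [simp]: "XV x \<in> Xs n \<longleftrightarrow> x \<in> {1..n}"
  and YV_notin_Xs [simp]: "YV y \<notin> Xs n"
  and XV_notin_Ys [simp]: "XV x \<notin> Ys k"
  and YV_in_Ys [simp]: "YV y \<in> Ys k \<longleftrightarrow> y \<in> {1..k}"
  by (auto simp: Xs_def Ys_def)

lemma eval_foldr_FAnd: "eval \<tau> (foldr FAnd \<phi>s FTop) \<longleftrightarrow> (\<forall>\<phi>\<in>set \<phi>s. eval \<tau> \<phi>)"
  by (induction \<phi>s) auto

lemma eval_Conj:
  assumes "finite F"
  shows "eval \<tau> (Conj F) \<longleftrightarrow> (\<forall>\<phi>\<in>F. eval \<tau> \<phi>)"
proof -
  have "set (SOME \<phi>s. set \<phi>s = F) = F"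
    using finite_list[OF assms] by (rule someI_ex)
  then show ?thesis
    by (simp add: Conj_def eval_foldr_FAnd)
qed

lemma eval_sb_clause:
  assumes "finite (D i)"
  shows "eval \<tau> (sb_clause D g i) \<longleftrightarrow>
    ((\<forall>x\<in>D i. \<tau> (XV x) = eval \<tau> (g (FVar (XV x)))) \<and>
     (\<forall>j\<in>{1..<i}. \<tau> (YV j) = eval \<tau> (g (FVar (YV j)))) \<longrightarrow>
     \<tau> (YV i) \<longrightarrow> eval \<tau> (g (FVar (YV i))))"
  using assms unfolding sb_clause_def Setcompr_eq_image by (simp add: eval_Conj)

lemma eval_sb_formula:
  assumes "finite G"
  shows "eval \<tau> (sb_formula k D G) \<longleftrightarrow> (\<forall>g\<in>G. \<forall>i\<in>{1..k}. eval \<tau> (sb_clause D g i))"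
proof -
  have "finite {sb_clause D g i | g i. g \<in> G \<and> i \<in> {1..k}}"
    using assms by (intro finite_image_set2) auto
  then show ?thesis
    unfolding sb_formula_def by (subst eval_Conj) blast+
qed

definition dep_values :: "(nat \<Rightarrow> nat set) \<Rightarrow> nat \<Rightarrow> (var \<Rightarrow> bool) \<Rightarrow> bool list" where
  "dep_values D j \<rho> = map (\<lambda>x. \<rho> (XV x)) (sorted_list_of_set (D j))"

definition asg_of_values :: "(nat \<Rightarrow> nat set) \<Rightarrow> nat \<Rightarrow> bool list \<Rightarrow> var \<Rightarrow> bool" where
  "asg_of_values D j l v \<longleftrightarrow> (\<exists>p<length l. v = XV (sorted_list_of_set (D j) ! p) \<and> l ! p)"

definition tabulate :: "(nat \<Rightarrow> nat set) \<Rightarrow> nat \<Rightarrow> ((var \<Rightarrow> bool) \<Rightarrow> bool) \<Rightarrow> bool list \<Rightarrow> bool" where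
  "tabulate D j F l \<longleftrightarrow> length l = card (D j) \<and> F (asg_of_values D j l)"

lemma length_dep_values [simp]: "length (dep_values D j \<rho>) = card (D j)"
  by (simp add: dep_values_def)

lemma dep_values_cong:
  "(\<And>x. x \<in> D j \<Longrightarrow> \<rho> (XV x) = \<rho>' (XV x)) \<Longrightarrow> finite (D j) \<Longrightarrow>
    dep_values D j \<rho> = dep_values D j \<rho>'"
  unfolding dep_values_def by (rule map_cong) simp_all

lemma dep_values_asg_of_values:
  assumes "finite (D j)" and "length l = card (D j)"
  shows "dep_values D j (asg_of_values D j l) = l"
proof (rule nth_equalityI)
  let ?xs = "sorted_list_of_set (D j)"
  show "length (dep_values D j (asg_of_values D j l)) = length l"
    using assms(2) by simp
  fix p assume "p < length (dep_values D j (asg_of_values D j l))"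
  then have p: "p < length ?xs" "p < length l"
    using assms(2) by auto
  have unique: "q = p" if "q < length l" "?xs ! q = ?xs ! p" for q
    using that p assms(2)
    by (metis distinct_sorted_list_of_set length_sorted_list_of_set nth_eq_iff_index_eq)
  have "dep_values D j (asg_of_values D j l) ! p \<longleftrightarrow> (\<exists>q<length l. ?xs ! p = ?xs ! q \<and> l ! q)"
    using p by (simp add: dep_values_def asg_of_values_def)
  also have "\<dots> \<longleftrightarrow> l ! p"
    using p unique by metis
  finally show "dep_values D j (asg_of_values D j l) ! p = l ! p" .
qed

lemma asg_of_values_dep_values:
  assumes "finite (D j)" and "x \<in> D j"
  shows "asg_of_values D j (dep_values D j \<rho>) (XV x) = \<rho> (XV x)"
proof -
  let ?xs = "sorted_list_of_set (D j)"
  obtain p where p: "p < length ?xs" "?xs ! p = x"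
    using assms by (metis in_set_conv_nth set_sorted_list_of_set)
  have unique: "q = p" if "q < length ?xs" "?xs ! q = x" for q
    using that p by (metis distinct_sorted_list_of_set nth_eq_iff_index_eq)
  have "asg_of_values D j (dep_values D j \<rho>) (XV x) \<longleftrightarrow>
      (\<exists>q<length ?xs. x = ?xs ! q \<and> map (\<lambda>x. \<rho> (XV x)) ?xs ! q)"
    by (simp add: asg_of_values_def dep_values_def)
  also have "\<dots> \<longleftrightarrow> \<rho> (XV x)"
    using p unique by (metis nth_map)
  finally show ?thesis .
qed

lemma tabulate_dep_values:
  assumes "finite (D j)"
    and "\<And>\<rho>'. (\<And>x. x \<in> D j \<Longrightarrow> \<rho>' (XV x) = \<rho> (XV x)) \<Longrightarrow> F \<rho>' = F \<rho>"
  shows "tabulate D j F (dep_values D j \<rho>) = F \<rho>"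
proof -
  have "F (asg_of_values D j (dep_values D j \<rho>)) = F \<rho>"
    using assms by (metis asg_of_values_dep_values)
  then show ?thesis
    by (simp add: tabulate_def)
qed

lemma induced_XV: "induced n k D s \<sigma> (XV x) = (if x \<in> {1..n} then \<sigma> (XV x) else False)"
  by (simp add: induced_def)

lemma induced_YV: "induced n k D s \<sigma> (YV j) = (if j \<in> {1..k} then s j (dep_values D j \<sigma>) else False)"
  by (simp add: induced_def dep_values_def)

lemma induced_Asg: "induced n k D s \<sigma> \<in> Asg (Xs n \<union> Ys k)"
  by (auto simp: Asg_def induced_def split: var.splits)

lemma eval_induced_Xs:
  "\<rho> \<in> Asg (Xs n) \<Longrightarrow> \<phi> \<in> BF (Xs n) \<Longrightarrow> eval (induced n k D s \<rho>) \<phi> = eval \<rho> \<phi>"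
  by (rule eval_cong) (auto simp: BF_def Xs_def induced_def)

lemma gasg_Asg: "gasg g V \<sigma> \<in> Asg V"
  by (auto simp: Asg_def gasg_def)

lemma gasg_id: "\<tau> \<in> Asg V \<Longrightarrow> gasg id V \<tau> = \<tau>"
  by (auto simp: Asg_def gasg_def fun_eq_iff)

locale symmetric_dqbf =
  fixes n k :: nat and D :: "nat \<Rightarrow> nat set" and Gsyn :: "(form \<Rightarrow> form) set"
  assumes prefix: "prefix n k D" and admissible_group: "admissible_group n k D Gsyn"
begin

abbreviation XY :: "var set" where "XY \<equiv> Xs n \<union> Ys k"

lemma D_subset: "j \<in> {1..k} \<Longrightarrow> D j \<subseteq> {1..n}"
  using prefix by (simp add: prefix_def)

lemma finite_D: "j \<in> {1..k} \<Longrightarrow> finite (D j)"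
  by (meson D_subset finite_atLeastAtMost finite_subset)

lemma id_in_Gsyn: "id \<in> Gsyn"
  using admissible_group by (simp add: admissible_group_def)

lemma comp_in_Gsyn: "a \<in> Gsyn \<Longrightarrow> b \<in> Gsyn \<Longrightarrow> a \<circ> b \<in> Gsyn"
  using admissible_group by (simp add: admissible_group_def)

lemma inverse_in_Gsyn: "g \<in> Gsyn \<Longrightarrow> \<exists>h\<in>Gsyn. g \<circ> h = id \<and> h \<circ> g = id"
  using admissible_group by (simp add: admissible_group_def)

lemma admissible: "g \<in> Gsyn \<Longrightarrow> admissible n k D g"
  using admissible_group by (simp add: admissible_group_def)

lemma image_in_BF: "g \<in> Gsyn \<Longrightarrow> \<phi> \<in> BF XY \<Longrightarrow> g \<phi> \<in> BF XY"
  using admissible unfolding admissible_def by (meson bij_betwE)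

lemma image_XV_in_BF_Xs: "g \<in> Gsyn \<Longrightarrow> x \<in> {1..n} \<Longrightarrow> g (FVar (XV x)) \<in> BF (Xs n)"
  using admissible unfolding admissible_def by blast

lemma eval_image:
  "g \<in> Gsyn \<Longrightarrow> \<tau> \<in> Asg XY \<Longrightarrow> \<phi> \<in> BF XY \<Longrightarrow> eval \<tau> (g \<phi>) = eval (gasg g XY \<tau>) \<phi>"
  using admissible unfolding admissible_def preserves_sat_def by blast

lemma the_inv_into_eq_inverse:
  assumes "g \<in> Gsyn" "h \<in> Gsyn" "g \<circ> h = id" "\<phi> \<in> BF XY"
  shows "the_inv_into (BF XY) g \<phi> = h \<phi>"
proof (rule the_inv_into_f_eq)
  show "inj_on g (BF XY)"
    using admissible[OF assms(1)] by (simp add: admissible_def bij_betw_def)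
  show "g (h \<phi>) = \<phi>"
    using assms(3) by (metis comp_apply id_apply)
  show "h \<phi> \<in> BF XY"
    using image_in_BF[OF assms(2,4)] .
qed

lemma inverse_image_XV_in_BF_Dv:
  assumes "g \<in> Gsyn" "h \<in> Gsyn" "g \<circ> h = id" and "j \<in> {1..k}" "l \<in> {1..k}"
    and "YV l \<in> vars (g (FVar (YV j)))" and "x \<in> D l"
  shows "h (FVar (XV x)) \<in> BF (Dv D j)"
proof -
  have x: "x \<in> {1..n}"
    using D_subset[OF assms(5)] assms(7) by blast
  have "depends_on k D (g (FVar (YV j))) x"
    using assms(5-7) by (auto simp: depends_on_def)
  then have "the_inv_into (BF XY) g (FVar (XV x)) \<in> BF (Dv D j)"
    using admissible[OF assms(1)] assms(4) x unfolding admissible_def by blast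
  then show ?thesis
    using the_inv_into_eq_inverse[OF assms(1-3)] x by simp
qed

lemma gasg_comp:
  assumes "a \<in> Gsyn" "b \<in> Gsyn" "\<tau> \<in> Asg XY"
  shows "gasg a XY (gasg b XY \<tau>) = gasg (b \<circ> a) XY \<tau>"
proof
  fix v
  show "gasg a XY (gasg b XY \<tau>) v = gasg (b \<circ> a) XY \<tau> v"
  proof (cases "v \<in> XY")
    case True
    then have "a (FVar v) \<in> BF XY"
      using image_in_BF[OF assms(1)] by simp
    then show ?thesis
      using True eval_image[OF assms(2,3)] by (simp add: gasg_def)
  qed (simp add: gasg_def)
qed

lemma gasg_comp_Xs:
  assumes "a \<in> Gsyn" "b \<in> Gsyn" "\<rho> \<in> Asg (Xs n)"
  shows "gasg a (Xs n) (gasg b (Xs n) \<rho>) = gasg (b \<circ> a) (Xs n) \<rho>"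
proof
  fix v
  show "gasg a (Xs n) (gasg b (Xs n) \<rho>) v = gasg (b \<circ> a) (Xs n) \<rho> v"
  proof (cases "v \<in> Xs n")
    case True
    then obtain x where x: "v = XV x" "x \<in> {1..n}"
      by (auto simp: Xs_def)
    have a_v: "a (FVar v) \<in> BF (Xs n)"
      using image_XV_in_BF_Xs[OF assms(1) x(2)] x(1) by simp
    have "eval (gasg b (Xs n) \<rho>) (a (FVar v)) = eval (gasg b XY \<rho>) (a (FVar v))"
      by (rule eval_cong) (use a_v in \<open>auto simp: BF_def gasg_def\<close>)
    also have "\<dots> = eval \<rho> (b (a (FVar v)))"
      using eval_image[OF assms(2), of \<rho> "a (FVar v)"] assms(3) a_v by (auto simp: BF_def Asg_def)
    finally show ?thesis
      using True by (simp add: gasg_def)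
  qed (simp add: gasg_def)
qed

lemma gasg_inverse:
  "g \<in> Gsyn \<Longrightarrow> h \<in> Gsyn \<Longrightarrow> g \<circ> h = id \<Longrightarrow> \<tau> \<in> Asg XY \<Longrightarrow> gasg h XY (gasg g XY \<tau>) = \<tau>"
  by (simp add: gasg_comp gasg_id)

lemma gasg_inverse_Xs:
  "g \<in> Gsyn \<Longrightarrow> h \<in> Gsyn \<Longrightarrow> g \<circ> h = id \<Longrightarrow> \<rho> \<in> Asg (Xs n) \<Longrightarrow>
    gasg h (Xs n) (gasg g (Xs n) \<rho>) = \<rho>"
  by (simp add: gasg_comp_Xs gasg_id)

lemma vars_image_FVar_nonempty:
  assumes "g \<in> Gsyn" and "v \<in> XY"
  shows "vars (g (FVar v)) \<noteq> {}"
proof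
  assume empty: "vars (g (FVar v)) = {}"
  obtain h where h: "h \<in> Gsyn" "h \<circ> g = id"
    using inverse_in_Gsyn[OF assms(1)] by blast
  have value_v: "\<tau> v = eval (gasg h XY \<tau>) (g (FVar v))" if "\<tau> \<in> Asg XY" for \<tau>
    using gasg_inverse[OF h(1) assms(1) h(2) that] assms(2) by (metis gasg_def)
  have "(\<lambda>w. w = v) \<in> Asg XY" "(\<lambda>w. False) \<in> Asg XY"
    using assms(2) by (auto simp: Asg_def)
  moreover have "eval (gasg h XY (\<lambda>w. w = v)) (g (FVar v)) =
      eval (gasg h XY (\<lambda>w. False)) (g (FVar v))"
    by (rule eval_cong) (simp add: empty)
  ultimately show False
    using value_v by fastforce
qed

lemma induced_gasg_XV:
  assumes "g \<in> Gsyn" "\<rho> \<in> Asg (Xs n)"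
  shows "induced n k D t (gasg g (Xs n) \<rho>) (XV x) = gasg g XY (induced n k D s \<rho>) (XV x)"
proof (cases "x \<in> {1..n}")
  case True
  have "eval (induced n k D s \<rho>) (g (FVar (XV x))) = eval \<rho> (g (FVar (XV x)))"
    using eval_induced_Xs[OF assms(2) image_XV_in_BF_Xs[OF assms(1) True]] .
  then show ?thesis
    using True by (simp add: induced_XV gasg_def)
qed (auto simp: induced_XV gasg_def)

definition compatible :: "(nat \<Rightarrow> bool list \<Rightarrow> bool) \<Rightarrow> (nat \<Rightarrow> bool list \<Rightarrow> bool) \<Rightarrow> bool" where
  "compatible s t \<longleftrightarrow> (\<forall>\<sigma>\<in>Asg (Xs n). \<exists>g\<in>Gsyn.
     induced n k D t (gasg g (Xs n) \<sigma>) = gasg g XY (induced n k D s \<sigma>))"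

lemma compatible_refl: "compatible s s"
  unfolding compatible_def using id_in_Gsyn by (metis gasg_id induced_Asg)

lemma compatible_trans:
  assumes "compatible r s" "compatible s t"
  shows "compatible r t"
  unfolding compatible_def
proof
  fix \<rho> assume \<rho>: "\<rho> \<in> Asg (Xs n)"
  obtain a where a: "a \<in> Gsyn"
    "induced n k D s (gasg a (Xs n) \<rho>) = gasg a XY (induced n k D r \<rho>)"
    using assms(1) \<rho> unfolding compatible_def by blast
  obtain b where b: "b \<in> Gsyn"
    "induced n k D t (gasg b (Xs n) (gasg a (Xs n) \<rho>)) = gasg b XY (induced n k D s (gasg a (Xs n) \<rho>))"
    using assms(2) gasg_Asg unfolding compatible_def by blast
  have "induced n k D t (gasg (a \<circ> b) (Xs n) \<rho>) = gasg (a \<circ> b) XY (induced n k D r \<rho>)"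
    using a b gasg_comp_Xs[OF b(1) a(1) \<rho>] gasg_comp[OF b(1) a(1) induced_Asg] by simp
  then show "\<exists>g\<in>Gsyn. induced n k D t (gasg g (Xs n) \<rho>) = gasg g XY (induced n k D r \<rho>)"
    using comp_in_Gsyn[OF a(1) b(1)] by blast
qed

lemma transpose_in_assoc_group:
  assumes "s \<in> Interp k D" "t \<in> Interp k D" "compatible s t" "compatible t s"
  shows "transpose s t \<in> assoc_group n k D Gsyn"
proof -
  have "compatible u (transpose s t u)" for u
    using assms(3,4) compatible_refl by (simp add: transpose_def)
  moreover have "transpose s t u = u" if "u \<notin> Interp k D" for u
    using that assms(1,2) by (metis transpose_apply_other)
  ultimately show ?thesis
    using assms(1,2) by (auto simp: assoc_group_def compatible_def)
qed

lemma conj_symmetry_breaker_by_descent: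
  assumes "wf r"
    and descent: "\<And>t. t \<in> Interp k D \<Longrightarrow> \<not> dqbf_val n k D \<psi> t \<Longrightarrow>
      \<exists>t'\<in>Interp k D. compatible t t' \<and> compatible t' t \<and> (w t', w t) \<in> r"
  shows "conj_symmetry_breaker n k D (assoc_group n k D Gsyn) \<psi>"
  unfolding conj_symmetry_breaker_def
proof
  fix s assume s: "s \<in> Interp k D"
  define orbit where "orbit = {u \<in> Interp k D. compatible s u \<and> compatible u s}"
  have "s \<in> orbit"
    using s compatible_refl by (simp add: orbit_def)
  then obtain t where t: "t \<in> orbit" and minimal: "\<And>u. (w u, w t) \<in> r \<Longrightarrow> u \<notin> orbit"
    using wfE_min[OF wf_inv_image[OF assms(1)]] by (metis in_inv_image)
  then have t_Interp: "t \<in> Interp k D" and st: "compatible s t" "compatible t s"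
    by (auto simp: orbit_def)
  have "dqbf_val n k D \<psi> t"
  proof (rule ccontr)
    assume "\<not> dqbf_val n k D \<psi> t"
    then obtain t' where "t' \<in> Interp k D" "compatible t t'" "compatible t' t" "(w t', w t) \<in> r"
      using descent t_Interp by blast
    then show False
      using minimal st compatible_trans unfolding orbit_def by blast
  qed
  then show "\<exists>f\<in>assoc_group n k D Gsyn. dqbf_val n k D \<psi> (f s)"
    using transpose_in_assoc_group[OF s t_Interp st] by (metis transpose_apply_first)
qed

definition true_counts :: "(nat \<Rightarrow> bool list \<Rightarrow> bool) \<Rightarrow> nat list" where
  "true_counts s = map (\<lambda>j. card {l. length l = card (D j) \<and> s j l}) [1..<Suc k]"

end

locale violated_clause = symmetric_dqbf +
  fixes t :: "nat \<Rightarrow> bool list \<Rightarrow> bool" and \<sigma> :: "var \<Rightarrow> bool"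
    and g h :: "form \<Rightarrow> form" and i :: nat
  assumes topsorted: "topsorted k D"
    and t_Interp: "t \<in> Interp k D" and \<sigma>_Asg: "\<sigma> \<in> Asg (Xs n)"
    and g_Gsyn: "g \<in> Gsyn" and h_Gsyn: "h \<in> Gsyn" and gh: "g \<circ> h = id" and hg: "h \<circ> g = id"
    and i_range: "i \<in> {1..k}"
    and c1: "\<forall>x\<in>D i. g (FVar (XV x)) \<in> BF (Dv D i)"
    and c2: "\<forall>j\<in>{1..k}. g (FVar (YV j)) \<in> BF (YV ` {l\<in>{1..k}. D l = D j})"
    and c3: "\<forall>j\<in>{1..k}. \<not> (D i \<subseteq> D j) \<and> \<not> (D j \<subseteq> D i) \<and> g (FVar (YV i)) \<noteq> FVar (YV i) \<longrightarrow>
               g (FVar (YV j)) = FVar (YV j) \<and> (\<forall>x\<in>D j - D i. g (FVar (XV x)) = FVar (XV x))"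
    and violated: "\<not> eval (induced n k D t \<sigma>) (sb_clause D g i)"
begin

abbreviation \<sigma>\<^sub>t :: "var \<Rightarrow> bool" where "\<sigma>\<^sub>t \<equiv> induced n k D t \<sigma>"

lemma
  shows g_preserves_XV: "\<forall>x\<in>D i. \<sigma>\<^sub>t (XV x) = eval \<sigma>\<^sub>t (g (FVar (XV x)))"
    and g_preserves_YV_below_i: "\<forall>j\<in>{1..<i}. \<sigma>\<^sub>t (YV j) = eval \<sigma>\<^sub>t (g (FVar (YV j)))"
    and y_i_true: "\<sigma>\<^sub>t (YV i)"
    and g_y_i_false: "\<not> eval \<sigma>\<^sub>t (g (FVar (YV i)))"
  using violated by (simp_all add: eval_sb_clause[of D i, OF finite_D[OF i_range]])

lemma g_moves_y_i: "g (FVar (YV i)) \<noteq> FVar (YV i)"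
  using y_i_true g_y_i_false by auto

lemma topsorted_less: "j \<in> {1..k} \<Longrightarrow> l \<in> {1..k} \<Longrightarrow> D j \<subset> D l \<Longrightarrow> j < l"
  using topsorted by (simp add: topsorted_def)

lemma D_i_range: "x \<in> D i \<Longrightarrow> x \<in> {1..n}"
  using D_subset[OF i_range] by blast

lemma vars_g_XV: "x \<in> D i \<Longrightarrow> vars (g (FVar (XV x))) \<subseteq> XV ` D i"
  using c1 by (auto simp: BF_def Dv_def)

lemma vars_g_YV: "j \<in> {1..k} \<Longrightarrow> v \<in> vars (g (FVar (YV j))) \<Longrightarrow> \<exists>l\<in>{1..k}. v = YV l \<and> D l = D j"
  using c2 by (fastforce simp: BF_def)

lemma g_preserves_XV_at_\<sigma>:
  assumes "x \<in> D i"
  shows "eval \<sigma> (g (FVar (XV x))) = \<sigma> (XV x)"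
proof -
  have "eval \<sigma>\<^sub>t (g (FVar (XV x))) = eval \<sigma> (g (FVar (XV x)))"
    using eval_induced_Xs[OF \<sigma>_Asg image_XV_in_BF_Xs[OF g_Gsyn D_i_range[OF assms]]] .
  moreover have "\<sigma>\<^sub>t (XV x) = \<sigma> (XV x)"
    using D_i_range[OF assms] by (simp add: induced_XV)
  ultimately show ?thesis
    using g_preserves_XV assms by simp
qed

definition agrees :: "(var \<Rightarrow> bool) \<Rightarrow> bool" where
  "agrees \<rho> \<longleftrightarrow> (\<forall>x\<in>D i. \<rho> (XV x) = \<sigma> (XV x))"

lemma agrees_\<sigma>: "agrees \<sigma>"
  by (simp add: agrees_def)

lemma agrees_gasg_g:
  assumes "agrees \<rho>"
  shows "agrees (gasg g (Xs n) \<rho>)"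
  unfolding agrees_def
proof
  fix x assume x: "x \<in> D i"
  have "eval \<rho> (g (FVar (XV x))) = eval \<sigma> (g (FVar (XV x)))"
    by (rule eval_cong) (use vars_g_XV[OF x] assms in \<open>auto simp: agrees_def\<close>)
  then show "gasg g (Xs n) \<rho> (XV x) = \<sigma> (XV x)"
    using g_preserves_XV_at_\<sigma>[OF x] D_i_range[OF x] by (simp add: gasg_def)
qed

lemma vars_h_XV:
  assumes "x \<in> D i"
  shows "vars (h (FVar (XV x))) \<subseteq> XV ` D i"
proof -
  obtain v where "v \<in> vars (g (FVar (YV i)))"
    using vars_image_FVar_nonempty[OF g_Gsyn, of "YV i"] i_range by auto
  then obtain l where "l \<in> {1..k}" "YV l \<in> vars (g (FVar (YV i)))" "D l = D i"
    using vars_g_YV[OF i_range] by blast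
  then have "h (FVar (XV x)) \<in> BF (Dv D i)"
    using inverse_image_XV_in_BF_Dv[OF g_Gsyn h_Gsyn gh i_range] assms by metis
  then show ?thesis
    by (auto simp: BF_def Dv_def)
qed

lemma agrees_gasg_h:
  assumes "agrees \<rho>"
  shows "agrees (gasg h (Xs n) \<rho>)"
  unfolding agrees_def
proof
  fix x assume x: "x \<in> D i"
  have "eval \<rho> (h (FVar (XV x))) = eval (gasg g (Xs n) \<sigma>) (h (FVar (XV x)))"
    by (rule eval_cong)
      (use vars_h_XV[OF x] assms agrees_gasg_g[OF agrees_\<sigma>] in \<open>auto simp: agrees_def\<close>)
  also have "\<dots> = gasg h (Xs n) (gasg g (Xs n) \<sigma>) (XV x)"
    using D_i_range[OF x] by (simp add: gasg_def)
  also have "\<dots> = \<sigma> (XV x)"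
    using gasg_inverse_Xs[OF g_Gsyn h_Gsyn gh \<sigma>_Asg] by simp
  finally show "gasg h (Xs n) \<rho> (XV x) = \<sigma> (XV x)"
    using D_i_range[OF x] by (simp add: gasg_def)
qed

lemma induced_YV_agrees:
  assumes "agrees \<rho>" "l \<in> {1..k}" "D l \<subseteq> D i"
  shows "induced n k D s \<rho> (YV l) = induced n k D s \<sigma> (YV l)"
proof -
  have "dep_values D l \<rho> = dep_values D l \<sigma>"
    by (rule dep_values_cong) (use assms finite_D in \<open>auto simp: agrees_def\<close>)
  then show ?thesis
    by (simp add: induced_YV)
qed

lemma eval_g_YV_agrees:
  assumes "agrees \<rho>" "j \<in> {1..k}" "D j \<subseteq> D i"
  shows "eval (induced n k D s \<rho>) (g (FVar (YV j))) = eval (induced n k D s \<sigma>) (g (FVar (YV j)))"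
proof (rule eval_cong)
  fix v assume "v \<in> vars (g (FVar (YV j)))"
  then obtain l where "l \<in> {1..k}" "v = YV l" "D l = D j"
    using vars_g_YV[OF assms(2)] by blast
  then show "induced n k D s \<rho> v = induced n k D s \<sigma> v"
    using induced_YV_agrees[OF assms(1)] assms(3) by simp
qed

definition moved_value :: "nat \<Rightarrow> (var \<Rightarrow> bool) \<Rightarrow> bool" where
  "moved_value j \<rho> = (if D i \<subseteq> D j \<and> agrees \<rho>
     then eval (induced n k D t (gasg h (Xs n) \<rho>)) (g (FVar (YV j)))
     else t j (dep_values D j \<rho>))"

definition t_moved :: "nat \<Rightarrow> bool list \<Rightarrow> bool" where
  "t_moved j = (if j \<in> {1..k} then tabulate D j (moved_value j) else (\<lambda>_. False))"

lemma moved_value_cong: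
  assumes j: "j \<in> {1..k}" and agree: "\<And>x. x \<in> D j \<Longrightarrow> \<rho>' (XV x) = \<rho> (XV x)"
  shows "moved_value j \<rho>' = moved_value j \<rho>"
proof -
  have "eval (induced n k D t (gasg h (Xs n) \<rho>')) (g (FVar (YV j))) =
      eval (induced n k D t (gasg h (Xs n) \<rho>)) (g (FVar (YV j)))"
  proof (rule eval_cong)
    fix v assume v: "v \<in> vars (g (FVar (YV j)))"
    then obtain l where l: "l \<in> {1..k}" "v = YV l"
      using vars_g_YV[OF j] by blast
    have "dep_values D l (gasg h (Xs n) \<rho>') = dep_values D l (gasg h (Xs n) \<rho>)"
    proof (rule dep_values_cong)
      fix x assume x: "x \<in> D l"
      have "h (FVar (XV x)) \<in> BF (Dv D j)"
        using inverse_image_XV_in_BF_Dv[OF g_Gsyn h_Gsyn gh j l(1)] v l(2) x by simp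
      then have "eval \<rho>' (h (FVar (XV x))) = eval \<rho> (h (FVar (XV x)))"
        by (intro eval_cong) (auto simp: BF_def Dv_def agree)
      then show "gasg h (Xs n) \<rho>' (XV x) = gasg h (Xs n) \<rho> (XV x)"
        by (simp add: gasg_def)
    qed (rule finite_D[OF l(1)])
    then show "induced n k D t (gasg h (Xs n) \<rho>') v = induced n k D t (gasg h (Xs n) \<rho>) v"
      using l by (simp add: induced_YV)
  qed
  moreover have "dep_values D j \<rho>' = dep_values D j \<rho>"
    using dep_values_cong[of D j \<rho>' \<rho>, OF agree finite_D[OF j]] .
  moreover have "D i \<subseteq> D j \<Longrightarrow> agrees \<rho>' = agrees \<rho>"
    using agree by (auto simp: agrees_def)
  ultimately show ?thesis
    by (cases "D i \<subseteq> D j") (simp_all add: moved_value_def)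
qed

lemma t_moved_dep_values:
  assumes "j \<in> {1..k}"
  shows "t_moved j (dep_values D j \<rho>) = moved_value j \<rho>"
proof -
  have "tabulate D j (moved_value j) (dep_values D j \<rho>) = moved_value j \<rho>"
    using finite_D[OF assms] moved_value_cong[OF assms] by (rule tabulate_dep_values)
  then show ?thesis
    using assms by (simp add: t_moved_def)
qed

lemma t_moved_asg_of_values:
  "j \<in> {1..k} \<Longrightarrow> length l = card (D j) \<Longrightarrow> t_moved j l = moved_value j (asg_of_values D j l)"
  by (simp add: t_moved_def tabulate_def)

lemma t_moved_Interp: "t_moved \<in> Interp k D"
  by (auto simp: Interp_def t_moved_def tabulate_def)

lemma dep_values_gasg_g_incomparable:
  assumes "agrees \<rho>" "j \<in> {1..k}" "\<not> D i \<subseteq> D j" "\<not> D j \<subseteq> D i"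
  shows "dep_values D j (gasg g (Xs n) \<rho>) = dep_values D j \<rho>"
proof (rule dep_values_cong)
  fix x assume x: "x \<in> D j"
  show "gasg g (Xs n) \<rho> (XV x) = \<rho> (XV x)"
  proof (cases "x \<in> D i")
    case True
    then show ?thesis
      using assms(1) agrees_gasg_g[OF assms(1)] by (simp add: agrees_def)
  next
    case False
    then have "g (FVar (XV x)) = FVar (XV x)"
      using c3 assms(2-4) g_moves_y_i x by blast
    then show ?thesis
      using x D_subset[OF assms(2)] by (auto simp: gasg_def)
  qed
qed (rule finite_D[OF assms(2)])

lemma moved_value_gasg_g:
  assumes \<rho>: "\<rho> \<in> Asg (Xs n)" and agrees: "agrees \<rho>" and j: "j \<in> {1..k}"
  shows "moved_value j (gasg g (Xs n) \<rho>) = eval (induced n k D t \<rho>) (g (FVar (YV j)))"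
proof -
  have agrees_g: "agrees (gasg g (Xs n) \<rho>)"
    using agrees_gasg_g[OF agrees] .
  consider "D i \<subseteq> D j" | "D j \<subset> D i" | "\<not> D i \<subseteq> D j" "\<not> D j \<subseteq> D i"
    by blast
  then show ?thesis
  proof cases
    case 1
    then show ?thesis
      using agrees_g gasg_inverse_Xs[OF g_Gsyn h_Gsyn gh \<rho>] by (simp add: moved_value_def)
  next
    case 2
    \<comment> \<open>then \<open>j < i\<close>, and the violated clause says that \<open>g\<close> fixes \<open>y\<^sub>j\<close> at \<open>\<sigma>\<close>\<close>
    have "moved_value j (gasg g (Xs n) \<rho>) = t j (dep_values D j (gasg g (Xs n) \<rho>))"
      using 2 by (auto simp: moved_value_def)
    also have "\<dots> = t j (dep_values D j \<sigma>)"
      using agrees_g 2 finite_D[OF j]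
      by (auto simp: agrees_def intro!: arg_cong[where f = "t j"] dep_values_cong)
    also have "\<dots> = \<sigma>\<^sub>t (YV j)"
      using j by (simp add: induced_YV)
    also have "\<dots> = eval \<sigma>\<^sub>t (g (FVar (YV j)))"
      using bspec[OF g_preserves_YV_below_i, of j] topsorted_less[OF j i_range 2] j by simp
    also have "\<dots> = eval (induced n k D t \<rho>) (g (FVar (YV j)))"
      using eval_g_YV_agrees[OF agrees j] 2 by simp
    finally show ?thesis .
  next
    case 3
    then have "g (FVar (YV j)) = FVar (YV j)"
      using c3 j g_moves_y_i by blast
    then show ?thesis
      using 3 dep_values_gasg_g_incomparable[OF agrees j 3] j
      by (simp add: moved_value_def induced_YV)
  qed
qed

lemma induced_t_moved_gasg_g:
  assumes "\<rho> \<in> Asg (Xs n)" "agrees \<rho>"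
  shows "induced n k D t_moved (gasg g (Xs n) \<rho>) = gasg g XY (induced n k D t \<rho>)"
proof
  fix v
  show "induced n k D t_moved (gasg g (Xs n) \<rho>) v = gasg g XY (induced n k D t \<rho>) v"
  proof (cases v)
    case (XV x)
    then show ?thesis
      using induced_gasg_XV[OF g_Gsyn assms(1)] by simp
  next
    case (YV j)
    then show ?thesis
      using t_moved_dep_values moved_value_gasg_g[OF assms]
      by (cases "j \<in> {1..k}") (auto simp: induced_YV gasg_def)
  qed
qed

lemma induced_t_gasg_h:
  assumes "\<rho> \<in> Asg (Xs n)" "agrees \<rho>"
  shows "induced n k D t (gasg h (Xs n) \<rho>) = gasg h XY (induced n k D t_moved \<rho>)"
proof -
  have "induced n k D t_moved \<rho> = gasg g XY (induced n k D t (gasg h (Xs n) \<rho>))"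
    using induced_t_moved_gasg_g[OF gasg_Asg agrees_gasg_h[OF assms(2)]]
      gasg_inverse_Xs[OF h_Gsyn g_Gsyn hg assms(1)] by simp
  then show ?thesis
    using gasg_inverse[OF g_Gsyn h_Gsyn gh induced_Asg] by simp
qed

lemma induced_t_moved_disagrees:
  assumes "\<not> agrees \<rho>"
  shows "induced n k D t_moved \<rho> = induced n k D t \<rho>"
proof
  fix v
  show "induced n k D t_moved \<rho> v = induced n k D t \<rho> v"
    using assms t_moved_dep_values
    by (cases v) (auto simp: induced_XV induced_YV moved_value_def)
qed

lemma compatible_t_t_moved: "compatible t t_moved"
  unfolding compatible_def
proof
  fix \<rho> assume \<rho>: "\<rho> \<in> Asg (Xs n)"
  show "\<exists>f\<in>Gsyn. induced n k D t_moved (gasg f (Xs n) \<rho>) = gasg f XY (induced n k D t \<rho>)"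
  proof (cases "agrees \<rho>")
    case True
    then show ?thesis
      using induced_t_moved_gasg_g[OF \<rho>] g_Gsyn by blast
  next
    case False
    then show ?thesis
      using induced_t_moved_disagrees id_in_Gsyn gasg_id[OF \<rho>] gasg_id[OF induced_Asg] by metis
  qed
qed

lemma compatible_t_moved_t: "compatible t_moved t"
  unfolding compatible_def
proof
  fix \<rho> assume \<rho>: "\<rho> \<in> Asg (Xs n)"
  show "\<exists>f\<in>Gsyn. induced n k D t (gasg f (Xs n) \<rho>) = gasg f XY (induced n k D t_moved \<rho>)"
  proof (cases "agrees \<rho>")
    case True
    then show ?thesis
      using induced_t_gasg_h[OF \<rho>] h_Gsyn by blast
  next
    case False
    then show ?thesis
      using induced_t_moved_disagrees id_in_Gsyn gasg_id[OF \<rho>] gasg_id[OF induced_Asg] by metis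
  qed
qed

lemma t_moved_before_i:
  assumes j: "j \<in> {1..<i}"
  shows "t_moved j = t j"
proof
  fix l
  have jk: "j \<in> {1..k}"
    using j i_range by auto
  show "t_moved j l = t j l"
  proof (cases "length l = card (D j)")
    case False
    then show ?thesis
      using t_Interp jk by (simp add: t_moved_def tabulate_def Interp_def)
  next
    case True
    let ?\<rho> = "asg_of_values D j l"
    have l: "dep_values D j ?\<rho> = l"
      using dep_values_asg_of_values[of D j, OF finite_D[OF jk] True] .
    show ?thesis
    proof (cases "D i \<subseteq> D j \<and> agrees ?\<rho>")
      case moved: True
      \<comment> \<open>topological sortedness and \<open>j < i\<close> leave only \<open>D j = D i\<close>, where \<open>g\<close> fixes \<open>y\<^sub>j\<close> at \<open>\<sigma>\<close>\<close>
      then have Dj: "D j = D i"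
        using topsorted_less[OF i_range jk] j by fastforce
      have "moved_value j ?\<rho> = eval (induced n k D t (gasg h (Xs n) ?\<rho>)) (g (FVar (YV j)))"
        using moved by (simp add: moved_value_def)
      also have "\<dots> = eval \<sigma>\<^sub>t (g (FVar (YV j)))"
        using eval_g_YV_agrees[OF agrees_gasg_h jk] moved Dj by simp
      also have "\<dots> = t j (dep_values D j \<sigma>)"
        using bspec[OF g_preserves_YV_below_i j] jk by (simp add: induced_YV)
      also have "\<dots> = t j l"
        using moved Dj l finite_D[OF jk] dep_values_cong[of D j ?\<rho> \<sigma>] by (auto simp: agrees_def)
      finally show ?thesis
        using t_moved_asg_of_values[OF jk True] by simp
    next
      case False
      then show ?thesis
        using t_moved_asg_of_values[OF jk True] l by (auto simp: moved_value_def)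
    qed
  qed
qed

lemma moved_value_i_false: "agrees \<rho> \<Longrightarrow> \<not> moved_value i \<rho>"
  using eval_g_YV_agrees[OF agrees_gasg_h i_range] g_y_i_false by (simp add: moved_value_def)

lemma true_count_i_less:
  "card {l. length l = card (D i) \<and> t_moved i l} < card {l. length l = card (D i) \<and> t i l}"
proof (rule psubset_card_mono)
  show "finite {l. length l = card (D i) \<and> t i l}"
    by (rule finite_subset[OF _ finite_lists_length_eq[OF finite_UNIV]]) auto
  have "t i l" if "length l = card (D i)" "t_moved i l" for l
  proof -
    have moved: "moved_value i (asg_of_values D i l)"
      using t_moved_asg_of_values[OF i_range that(1)] that(2) by simp
    then have "\<not> agrees (asg_of_values D i l)"
      using moved_value_i_false by blast
    then show ?thesis
      using moved dep_values_asg_of_values[of D i, OF finite_D[OF i_range] that(1)]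
      by (simp add: moved_value_def)
  qed
  moreover have "t i (dep_values D i \<sigma>)" "\<not> t_moved i (dep_values D i \<sigma>)"
    using y_i_true moved_value_i_false[OF agrees_\<sigma>] t_moved_dep_values[OF i_range] i_range
    by (simp_all add: induced_YV)
  ultimately show "{l. length l = card (D i) \<and> t_moved i l} \<subset> {l. length l = card (D i) \<and> t i l}"
    by auto
qed

lemma true_counts_t_moved_less: "(true_counts t_moved, true_counts t) \<in> lex less_than"
proof -
  have "1 \<le> i" "i < Suc k"
    using i_range by auto
  then have split: "[1..<Suc k] = [1..<i] @ i # [Suc i..<Suc k]"
    using upt_add_eq_append[of 1 i "Suc k - i"] upt_conv_Cons[of i "Suc k"] by simp
  have before: "map (\<lambda>j. card {l. length l = card (D j) \<and> t_moved j l}) [1..<i] =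
      map (\<lambda>j. card {l. length l = card (D j) \<and> t j l}) [1..<i]"
    using t_moved_before_i by simp
  show ?thesis
    unfolding true_counts_def split map_append before
    by (rule lex_append_leftI) (simp add: true_count_i_less)
qed

lemma exists_smaller_compatible:
  "\<exists>t'\<in>Interp k D. compatible t t' \<and> compatible t' t \<and> (true_counts t', true_counts t) \<in> lex less_than"
  using t_moved_Interp compatible_t_t_moved compatible_t_moved_t true_counts_t_moved_less by blast

end

theorem theorem2:
  fixes n k :: nat and D :: "nat \<Rightarrow> nat set"
    and Gsyn G :: "(form \<Rightarrow> form) set"
  assumes "prefix n k D"
    and "topsorted k D"
    and "admissible_group n k D Gsyn"
    and "finite G" and "G \<subseteq> Gsyn"
    and c1: "\<forall>g\<in>G. \<forall>i\<in>{1..k}. \<forall>x\<in>D i. g (FVar (XV x)) \<in> BF (Dv D i)"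
    and c2: "\<forall>g\<in>G. \<forall>i\<in>{1..k}. g (FVar (YV i)) \<in> BF (YV ` {j\<in>{1..k}. D j = D i})"
    and c3: "\<forall>g\<in>G. \<forall>i\<in>{1..k}. \<forall>j\<in>{1..k}.
               \<not> (D i \<subseteq> D j) \<and> \<not> (D j \<subseteq> D i) \<and> g (FVar (YV i)) \<noteq> FVar (YV i) \<longrightarrow>
                 g (FVar (YV j)) = FVar (YV j) \<and> (\<forall>x\<in>D j - D i. g (FVar (XV x)) = FVar (XV x))"
  shows "conj_symmetry_breaker n k D (assoc_group n k D Gsyn) (sb_formula k D G)"
proof -
  interpret symmetric_dqbf n k D Gsyn
    using assms(1,3) by unfold_locales
  show ?thesis
  proof (rule conj_symmetry_breaker_by_descent[OF wf_lex[OF wf_less_than], where w = true_counts])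
    fix t assume t: "t \<in> Interp k D" "\<not> dqbf_val n k D (sb_formula k D G) t"
    then obtain \<sigma> g i where clause: "\<sigma> \<in> Asg (Xs n)" "g \<in> G" "i \<in> {1..k}"
        "\<not> eval (induced n k D t \<sigma>) (sb_clause D g i)"
      using eval_sb_formula[OF \<open>finite G\<close>] by (auto simp: dqbf_val_def)
    obtain h where h: "h \<in> Gsyn" "g \<circ> h = id" "h \<circ> g = id"
      using inverse_in_Gsyn clause(2) \<open>G \<subseteq> Gsyn\<close> by blast
    interpret violated_clause n k D Gsyn t \<sigma> g h i
      by (unfold_locales; use assms t clause h in blast)
    show "\<exists>t'\<in>Interp k D. compatible t t' \<and> compatible t' t \<and> (true_counts t', true_counts t) \<in> lex less_than"
      by (rule exists_smaller_compatible)
  qed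
qed

end
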